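(* Let $\mathcal A=(S,R_0)$ be an argumentation network with joint attacks, where $S\neq\varnothing$ and $R_0\subseteq(2^S\setminus\{\varnothing\})\times S$, such that every $x\in S$ is attacked by finitely many sets $G$ (with $GR_0x$) and every such $G$ is finite. Regard the elements of $S$ as atoms of $\mathbf{CN}$ and let $\Delta_{\mathcal A}$ consist of the following formulas for every $x\in S$: $$(\textstyle\bigvee_{GR_0x}\bigwedge_{z\in G}z)\to Nx,\qquad x\leftrightarrow \bigwedge_{GR_0x}\bigvee_{z\in G}Nz,$$ $$\textstyle\bigwedge_{GR_0x}(\bigvee_{z\in G}\neg z)\wedge\bigl(\bigvee_{GR_0x}\bigwedge_{z\in G}(z\vee\neg Nz)\bigr)\to\neg x\wedge\neg Nx$$ (empty conjunction $\top$, empty disjunction $\bot$). Then the $\mathbf{CN}$-models of $\Delta_{\mathcal A}$ correspond exactly to the legitimate Caminada–Gabbay labellings of $\mathcal A$: for every $\mathbf{CN}$-model $h$ of $\Delta_{\mathcal A}$, the map $\lambda_h$ with $\lambda_h(x)=\mathrm{in}$ if $h(x)=1$, $\mathrm{out}$ if $h(Nx)=1$, $\mathrm{und}$ if $h(x)=h(Nx)=0$ is a legitimate Caminada–Gabbay labelling; and for every legitimate Caminada–Gabbay labelling $\lambda$, the assignment $h_\lambda$ with $h_\lambda(x)=1$ iff $\lambda(x)=\mathrm{in}$ and $h_\lambda(Nx)=1$ iff $\lambda(x)=\mathrm{out}$ is a $\mathbf{CN}$-model of $\Delta_{\mathcal A}$.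
   Context: The logic $\mathbf{CN}$: atomic formulas are $q$ and $Nq$ for basic atoms $q$; formulas use classical connectives; a $\mathbf{CN}$-model is a classical $\{0,1\}$-assignment $h$ to all atoms $q,Nq$ with $h(Nq)=1\Rightarrow h(q)=0$, with classical satisfaction. A legitimate Caminada–Gabbay labelling of $(S,R_0)$ is $\lambda:S\to\{\mathrm{in},\mathrm{out},\mathrm{und}\}$ such that for each $x$: (CG1) $\lambda(x)=\mathrm{in}$ iff either $x$ is attacked by no $G$, or for every $G$ with $GR_0x$ there is $y\in G$ with $\lambda(y)=\mathrm{out}$; (CG2) $\lambda(x)=\mathrm{out}$ iff for some $G$ with $GR_0x$, all $y\in G$ have $\lambda(y)=\mathrm{in}$; (CG3) $\lambda(x)=\mathrm{und}$ iff for every $G$ with $GR_0x$ there is $y\in G$ with $\lambda(y)\neq\mathrm{in}$, and for some $G'$ with $G'R_0x$ every $y\in G'$ has $\lambda(y)\in\{\mathrm{in},\mathrm{und}\}$. *)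

theory Defs
  imports Main
begin

datatype 'a cn_atom = Pos 'a | Nq 'a

datatype 'a cn_form =
    Atom "'a cn_atom"
  | Top
  | Bot
  | Not "'a cn_form"
  | And "'a cn_form" "'a cn_form"
  | Or "'a cn_form" "'a cn_form"
  | Imp "'a cn_form" "'a cn_form"
  | Iff "'a cn_form" "'a cn_form"

fun sat :: "('a cn_atom \<Rightarrow> bool) \<Rightarrow> 'a cn_form \<Rightarrow> bool" where
  "sat h (Atom a) = h a"
| "sat h Top = True"
| "sat h Bot = False"
| "sat h (Not p) = (\<not> sat h p)"
| "sat h (And p q) = (sat h p \<and> sat h q)"
| "sat h (Or p q) = (sat h p \<or> sat h q)"
| "sat h (Imp p q) = (sat h p \<longrightarrow> sat h q)"
| "sat h (Iff p q) = (sat h p \<longleftrightarrow> sat h q)"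

definition Conjs :: "'a cn_form list \<Rightarrow> 'a cn_form" where
  "Conjs ps = foldr And ps Top"

definition Disjs :: "'a cn_form list \<Rightarrow> 'a cn_form" where
  "Disjs ps = foldr Or ps Bot"

definition list_of :: "'b set \<Rightarrow> 'b list" where
  "list_of A = (SOME xs. set xs = A \<and> distinct xs)"

definition BigAnd :: "'b set \<Rightarrow> ('b \<Rightarrow> 'a cn_form) \<Rightarrow> 'a cn_form" where
  "BigAnd A f = Conjs (map f (list_of A))"

definition BigOr :: "'b set \<Rightarrow> ('b \<Rightarrow> 'a cn_form) \<Rightarrow> 'a cn_form" where
  "BigOr A f = Disjs (map f (list_of A))"

definition cn_model :: "('a cn_atom \<Rightarrow> bool) \<Rightarrow> bool" where
  "cn_model h \<longleftrightarrow> (\<forall>q. h (Nq q) \<longrightarrow> \<not> h (Pos q))"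

definition cn_model_of :: "('a cn_atom \<Rightarrow> bool) \<Rightarrow> 'a cn_form set \<Rightarrow> bool" where
  "cn_model_of h \<Delta> \<longleftrightarrow> cn_model h \<and> (\<forall>\<phi>\<in>\<Delta>. sat h \<phi>)"

definition joint_af :: "'a set \<Rightarrow> ('a set \<times> 'a) set \<Rightarrow> bool" where
  "joint_af S R0 \<longleftrightarrow> S \<noteq> {} \<and> R0 \<subseteq> (Pow S - {{}}) \<times> S"

definition attackers :: "('a set \<times> 'a) set \<Rightarrow> 'a \<Rightarrow> 'a set set" where
  "attackers R0 x = {G. (G, x) \<in> R0}"

definition Delta :: "'a set \<Rightarrow> ('a set \<times> 'a) set \<Rightarrow> 'a cn_form set" where
  "Delta S R0 = (\<Union>x\<in>S.
     { Imp (BigOr (attackers R0 x) (\<lambda>G. BigAnd G (\<lambda>z. Atom (Pos z)))) (Atom (Nq x)),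
       Iff (Atom (Pos x)) (BigAnd (attackers R0 x) (\<lambda>G. BigOr G (\<lambda>z. Atom (Nq z)))),
       Imp (And (BigAnd (attackers R0 x) (\<lambda>G. BigOr G (\<lambda>z. Not (Atom (Pos z)))))
                (BigOr (attackers R0 x) (\<lambda>G. BigAnd G (\<lambda>z. Or (Atom (Pos z)) (Not (Atom (Nq z)))))))
           (And (Not (Atom (Pos x))) (Not (Atom (Nq x)))) })"

datatype label = In | Out | Und

definition legit_CG :: "'a set \<Rightarrow> ('a set \<times> 'a) set \<Rightarrow> ('a \<Rightarrow> label) \<Rightarrow> bool" where
  "legit_CG S R0 lab \<longleftrightarrow> (\<forall>x\<in>S.
     (lab x = In \<longleftrightarrow> (attackers R0 x = {} \<or> (\<forall>G\<in>attackers R0 x. \<exists>y\<in>G. lab y = Out))) \<and>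
     (lab x = Out \<longleftrightarrow> (\<exists>G\<in>attackers R0 x. \<forall>y\<in>G. lab y = In)) \<and>
     (lab x = Und \<longleftrightarrow> ((\<forall>G\<in>attackers R0 x. \<exists>y\<in>G. lab y \<noteq> In) \<and>
                         (\<exists>G'\<in>attackers R0 x. \<forall>y\<in>G'. lab y \<in> {In, Und}))))"

definition lab_of_model :: "('a cn_atom \<Rightarrow> bool) \<Rightarrow> 'a \<Rightarrow> label" where
  "lab_of_model h x = (if h (Pos x) then In else if h (Nq x) then Out else Und)"

definition model_of_lab :: "('a \<Rightarrow> label) \<Rightarrow> 'a cn_atom \<Rightarrow> bool" where
  "model_of_lab lab a = (case a of Pos x \<Rightarrow> lab x = In | Nq x \<Rightarrow> lab x = Out)"

end

theory Submission
  imports Defs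
begin

text \<open>Since a label is In, Out or Und, CG3 follows from CG1 and CG2; so both a legitimate
  labelling and a CN-model of \<open>\<Delta>\<close> amount to the same two conditions on the atoms \<open>x\<close> and
  \<open>Nx\<close>. For \<open>\<Delta>\<close> this uses that in a CN-model \<open>z \<or> \<not> Nz\<close> is equivalent to \<open>\<not> Nz\<close>, which
  reduces the third formula to the converse of the first. As \<open>h\<^sub>\<lambda>\<close> is a CN-model with
  \<open>\<lambda>\<^bsub>h\<^sub>\<lambda>\<^esub> = \<lambda>\<close>, both directions are instances of this one equivalence.\<close>

lemma set_list_of: "finite A \<Longrightarrow> set (list_of A) = A"
  unfolding list_of_def by (metis (mono_tags, lifting) finite_distinct_list someI_ex)

lemma sat_Conjs: "sat h (Conjs ps) \<longleftrightarrow> (\<forall>p\<in>set ps. sat h p)"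
  unfolding Conjs_def by (induction ps) auto

lemma sat_Disjs: "sat h (Disjs ps) \<longleftrightarrow> (\<exists>p\<in>set ps. sat h p)"
  unfolding Disjs_def by (induction ps) auto

lemma sat_BigAnd: "finite A \<Longrightarrow> sat h (BigAnd A f) \<longleftrightarrow> (\<forall>a\<in>A. sat h (f a))"
  unfolding BigAnd_def by (simp add: sat_Conjs set_list_of)

lemma sat_BigOr: "finite A \<Longrightarrow> sat h (BigOr A f) \<longleftrightarrow> (\<exists>a\<in>A. sat h (f a))"
  unfolding BigOr_def by (simp add: sat_Disjs set_list_of)

definition cg_conditions :: "'a set \<Rightarrow> ('a set \<times> 'a) set \<Rightarrow> ('a cn_atom \<Rightarrow> bool) \<Rightarrow> bool" where
  "cg_conditions S R0 h \<longleftrightarrow> (\<forall>x\<in>S.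
     (h (Pos x) \<longleftrightarrow> (\<forall>G\<in>attackers R0 x. \<exists>z\<in>G. h (Nq z))) \<and>
     (h (Nq x) \<longleftrightarrow> (\<exists>G\<in>attackers R0 x. \<forall>z\<in>G. h (Pos z))))"

lemma legit_CG_iff:
  "legit_CG S R0 lab \<longleftrightarrow> (\<forall>x\<in>S.
     (lab x = In \<longleftrightarrow> (\<forall>G\<in>attackers R0 x. \<exists>y\<in>G. lab y = Out)) \<and>
     (lab x = Out \<longleftrightarrow> (\<exists>G\<in>attackers R0 x. \<forall>y\<in>G. lab y = In)))"
proof -
  have und: "lab y = Und \<longleftrightarrow> \<not> lab y = In \<and> \<not> lab y = Out"
    and in_und: "lab y \<in> {In, Und} \<longleftrightarrow> \<not> lab y = Out" for y
    by (cases "lab y"; simp)+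
  have no_attack: "attackers R0 x = {} \<or> (\<forall>G\<in>attackers R0 x. P G) \<longleftrightarrow> (\<forall>G\<in>attackers R0 x. P G)"
    for x P by blast
  have CG3_redundant: "(p \<longleftrightarrow> a) \<and> (q \<longleftrightarrow> b) \<and> (\<not> p \<and> \<not> q \<longleftrightarrow> \<not> b \<and> \<not> a)
      \<longleftrightarrow> (p \<longleftrightarrow> a) \<and> (q \<longleftrightarrow> b)" for p q a b by blast
  show ?thesis
    unfolding legit_CG_def und in_und no_attack bex_simps(8)[symmetric] ball_simps(10)[symmetric]
      CG3_redundant ..
qed

lemma lab_of_model_eq_In: "lab_of_model h x = In \<longleftrightarrow> h (Pos x)"
  unfolding lab_of_model_def by simp

lemma lab_of_model_eq_Out: "cn_model h \<Longrightarrow> lab_of_model h x = Out \<longleftrightarrow> h (Nq x)"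
  unfolding lab_of_model_def cn_model_def by auto

lemma legit_CG_lab_of_model_iff:
  "cn_model h \<Longrightarrow> legit_CG S R0 (lab_of_model h) \<longleftrightarrow> cg_conditions S R0 h"
  by (simp add: legit_CG_iff cg_conditions_def lab_of_model_eq_In lab_of_model_eq_Out)

lemma cn_model_model_of_lab: "cn_model (model_of_lab lab)"
  unfolding cn_model_def model_of_lab_def by simp

lemma lab_of_model_model_of_lab: "lab_of_model (model_of_lab lab) = lab"
proof
  show "lab_of_model (model_of_lab lab) x = lab x" for x
    unfolding lab_of_model_def model_of_lab_def by (cases "lab x") simp_all
qed

lemma sat_Delta_iff:
  assumes fin_att: "\<forall>x\<in>S. finite (attackers R0 x)"
    and fin_G: "\<forall>(G, x)\<in>R0. finite G"
    and h: "cn_model h"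
  shows "(\<forall>\<phi>\<in>Delta S R0. sat h \<phi>) \<longleftrightarrow> cg_conditions S R0 h"
proof -
  have fin: "finite G" if "G \<in> attackers R0 x" for G x
    using that fin_G unfolding attackers_def by auto
  have weak_attack: "(\<forall>z\<in>G. h (Pos z) \<or> \<not> h (Nq z)) \<longleftrightarrow> (\<forall>z\<in>G. \<not> h (Nq z))" for G
    using h unfolding cn_model_def by blast
  have "(\<forall>\<phi>\<in>Delta S R0. sat h \<phi>) \<longleftrightarrow> (\<forall>x\<in>S.
      ((\<exists>G\<in>attackers R0 x. \<forall>z\<in>G. h (Pos z)) \<longrightarrow> h (Nq x)) \<and>
      (h (Pos x) \<longleftrightarrow> (\<forall>G\<in>attackers R0 x. \<exists>z\<in>G. h (Nq z))) \<and>
      (\<not> (\<exists>G\<in>attackers R0 x. \<forall>z\<in>G. h (Pos z)) \<and>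
       \<not> (\<forall>G\<in>attackers R0 x. \<exists>z\<in>G. h (Nq z)) \<longrightarrow> \<not> h (Pos x) \<and> \<not> h (Nq x)))"
    unfolding Delta_def using fin_att fin by (simp add: sat_BigAnd sat_BigOr weak_attack)
  also have "\<dots> \<longleftrightarrow> cg_conditions S R0 h"
  proof -
    have collapse: "N \<longrightarrow> \<not> P \<Longrightarrow>
        ((B \<longrightarrow> N) \<and> (P \<longleftrightarrow> A) \<and> (\<not> B \<and> \<not> A \<longrightarrow> \<not> P \<and> \<not> N)) \<longleftrightarrow> (P \<longleftrightarrow> A) \<and> (N \<longleftrightarrow> B)"
      for P N A B by blast
    show ?thesis
      unfolding cg_conditions_def
      by (intro ball_cong refl collapse) (use h in \<open>simp add: cn_model_def\<close>)
  qed
  finally show ?thesis .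
qed

theorem theorem20:
  fixes S :: "'a set" and R0 :: "('a set \<times> 'a) set"
  assumes "joint_af S R0"
    and "\<forall>x\<in>S. finite (attackers R0 x)"
    and "\<forall>(G, x)\<in>R0. finite G"
  shows "(\<forall>h. cn_model_of h (Delta S R0) \<longrightarrow> legit_CG S R0 (lab_of_model h))
       \<and> (\<forall>lab. legit_CG S R0 lab \<longrightarrow> cn_model_of (model_of_lab lab) (Delta S R0))"
proof (intro conjI allI impI)
  fix h assume "cn_model_of h (Delta S R0)"
  then have h: "cn_model h" and "\<forall>\<phi>\<in>Delta S R0. sat h \<phi>"
    unfolding cn_model_of_def by blast+
  then have "cg_conditions S R0 h"
    by (simp only: sat_Delta_iff[OF assms(2,3) h])
  then show "legit_CG S R0 (lab_of_model h)"
    by (simp only: legit_CG_lab_of_model_iff[OF h])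
next
  fix lab assume "legit_CG S R0 lab"
  then have "legit_CG S R0 (lab_of_model (model_of_lab lab))"
    by (simp only: lab_of_model_model_of_lab)
  then have "cg_conditions S R0 (model_of_lab lab)"
    by (simp only: legit_CG_lab_of_model_iff[OF cn_model_model_of_lab])
  then have "\<forall>\<phi>\<in>Delta S R0. sat (model_of_lab lab) \<phi>"
    by (simp only: sat_Delta_iff[OF assms(2,3) cn_model_model_of_lab])
  then show "cn_model_of (model_of_lab lab) (Delta S R0)"
    unfolding cn_model_of_def using cn_model_model_of_lab by blast
qed

end
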